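(* For real $\alpha\ge0$ and $\sigma^2>0$ let $\psi_1(\alpha,\sigma^2)=\int_0^{\pi/2}\frac{\alpha\sin^2\theta}{(\alpha^2\sin^2\theta+\sigma^2)^{1/2}}d\theta$. Then: (i) for each fixed $\sigma^2>0$, $\alpha\mapsto\psi_1(\alpha,\sigma^2)$ is concave and strictly increasing on $\alpha>0$; (ii) $0<\psi_1(\alpha,\sigma^2)\le1$ for all $\alpha>0,\sigma^2>0$; (iii) if $0<\sigma^2<\pi^2/16$, the equation $\alpha=\psi_1(\alpha,\sigma^2)$ has exactly two nonnegative solutions, $\alpha=0$ and $\alpha=F_1(\sigma^2)>0$, and $\alpha<\psi_1(\alpha,\sigma^2)<F_1(\sigma^2)$ for $\alpha\in(0,F_1(\sigma^2))$, while $F_1(\sigma^2)<\psi_1(\alpha,\sigma^2)<\alpha$ for $\alpha>F_1(\sigma^2)$. If $\sigma^2\ge\pi^2/16$, then $\alpha=0$ is the unique nonnegative solution, and $0<\psi_1(\alpha,\sigma^2)<\alpha$ for all $\alpha>0$. *)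

theory Defs
  imports "HOL-Analysis.Analysis"
begin

text \<open>psi1 a s, where s stands for sigma squared (s > 0).\<close>
definition psi1 :: "real \<Rightarrow> real \<Rightarrow> real" where
  "psi1 a s = integral {0..pi/2}
     (\<lambda>\<theta>. a * (sin \<theta>)^2 / sqrt (a^2 * (sin \<theta>)^2 + s))"

end

theory Submission
  imports Defs
begin

text \<open>
  Write \<open>psi1 a s = a * h a\<close>, where \<open>h a\<close> is the integral of
  \<open>sin\<^sup>2 \<theta> / sqrt (a\<^sup>2 sin\<^sup>2 \<theta> + s)\<close> over \<open>[0, \<pi>/2]\<close>.
  Pointwise in \<open>\<theta>\<close>, the integrand of \<open>psi1\<close> is increasing and concave in \<open>a\<close> and bounded by
  \<open>sin \<theta>\<close>, which gives (i) and (ii); the integrand of \<open>h\<close> is strictly decreasing in \<open>a\<close>.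
  Hence the positive solutions of \<open>a = psi1 a s\<close> are the solutions of \<open>h a = 1\<close>, there is at
  most one, and \<open>psi1 a s - a\<close> has the sign of \<open>h a - 1\<close>. As \<open>h 0 = \<pi> / (4 sqrt s)\<close>, there is
  none when \<open>s \<ge> \<pi>\<^sup>2/16\<close>. When \<open>s < \<pi>\<^sup>2/16\<close>, the bound \<open>h a \<ge> \<pi> / (4 sqrt (a\<^sup>2 + s))\<close> gives
  \<open>a < psi1 a s\<close> for small \<open>a > 0\<close>, while \<open>psi1 2 s \<le> 1 < 2\<close>, so the intermediate value
  theorem (with continuity from concavity) produces one.
\<close>

lemma concave_on_integral:
  fixes f :: "'a::real_vector \<Rightarrow> 'b::euclidean_space \<Rightarrow> real"
  assumes "convex S"
    and integrable: "\<And>x. x \<in> S \<Longrightarrow> f x integrable_on T"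
    and concave: "\<And>t. t \<in> T \<Longrightarrow> concave_on S (\<lambda>x. f x t)"
  shows "concave_on S (\<lambda>x. integral T (f x))"
  unfolding concave_on_iff
proof (intro conjI ballI allI impI)
  fix x y and u v :: real
  assume xy: "x \<in> S" "y \<in> S" and uv: "0 \<le> u" "0 \<le> v" "u + v = 1"
  have ix: "(\<lambda>t. u * f x t) integrable_on T" and iy: "(\<lambda>t. v * f y t) integrable_on T"
    using integrable xy by (auto intro: integrable_on_mult_right)
  have "u * integral T (f x) + v * integral T (f y) = integral T (\<lambda>t. u * f x t + v * f y t)"
    using ix iy by (simp add: integral_add)
  also have "\<dots> \<le> integral T (f (u *\<^sub>R x + v *\<^sub>R y))"
    using ix iy integrable[OF convexD[OF \<open>convex S\<close> xy uv]] concave xy uv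
    by (intro integral_le integrable_add) (auto simp: concave_on_iff)
  finally show "u * integral T (f x) + v * integral T (f y) \<le> integral T (f (u *\<^sub>R x + v *\<^sub>R y))" .
qed (fact \<open>convex S\<close>)

lemma integral_sin_0_pi_half: "integral {0..pi/2} sin = 1"
proof -
  have "(sin has_integral (- cos (pi/2) - - cos 0)) {0..pi/2}"
  proof (rule fundamental_theorem_of_calculus)
    fix x :: real
    have "((\<lambda>x. - cos x) has_real_derivative sin x) (at x)"
      by (auto intro!: derivative_eq_intros)
    then show "((\<lambda>x. - cos x) has_vector_derivative sin x) (at x within {0..pi/2})"
      using has_real_derivative_iff_has_vector_derivative has_vector_derivative_at_within by blast
  qed simp
  then show ?thesis
    by (simp add: integral_unique)
qed

lemma integral_sin_squared_0_pi_half: "integral {0..pi/2} (\<lambda>t. (sin t)^2) = pi/4"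
proof -
  let ?F = "\<lambda>x. x/2 - sin x * cos x / 2"
  have "((\<lambda>t. (sin t)^2) has_integral (?F (pi/2) - ?F 0)) {0..pi/2}"
  proof (rule fundamental_theorem_of_calculus)
    fix x :: real
    have "(?F has_real_derivative (1 - (cos x)^2 + (sin x)^2) / 2) (at x)"
      by (auto intro!: derivative_eq_intros simp: power2_eq_square field_simps)
    also have "(1 - (cos x)^2 + (sin x)^2) / 2 = (sin x)^2"
      by (simp add: sin_squared_eq)
    finally show "(?F has_vector_derivative (sin x)^2) (at x within {0..pi/2})"
      using has_real_derivative_iff_has_vector_derivative has_vector_derivative_at_within by blast
  qed simp
  then show ?thesis
    by (simp add: integral_unique)
qed

lemma mult_div_sqrt_strict_mono:
  fixes s :: real
  assumes "0 \<le> a" "a < b" "0 < u" "0 < s"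
  shows "a * u / sqrt (a^2 * u + s) < b * u / sqrt (b^2 * u + s)"
proof -
  have "a^2 * s < b^2 * s"
    using assms by (simp add: power_strict_mono)
  then have "sqrt (a^2 * (b^2 * u + s)) < sqrt (b^2 * (a^2 * u + s))"
    by (simp add: algebra_simps)
  then have "a * sqrt (b^2 * u + s) < b * sqrt (a^2 * u + s)"
    using assms by (simp add: real_sqrt_mult)
  then have "a * u * sqrt (b^2 * u + s) < b * u * sqrt (a^2 * u + s)"
    using assms by (simp add: mult.commute mult.left_commute)
  moreover have "0 < sqrt (a^2 * u + s)" "0 < sqrt (b^2 * u + s)"
    using assms by (simp_all add: add_nonneg_pos)
  ultimately show ?thesis
    by (simp add: divide_less_eq less_divide_eq mult.commute mult.left_commute)
qed

lemma div_sqrt_strict_antimono: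
  fixes s :: real
  assumes "0 \<le> a" "a < b" "0 < u" "0 < s"
  shows "u / sqrt (b^2 * u + s) < u / sqrt (a^2 * u + s)"
proof -
  have "a^2 < b^2"
    using assms by (simp add: power_strict_mono)
  then have "sqrt (a^2 * u + s) < sqrt (b^2 * u + s)"
    using assms by simp
  moreover have "0 < sqrt (a^2 * u + s)"
    using assms by (simp add: add_nonneg_pos)
  ultimately show ?thesis
    using \<open>0 < u\<close> by (meson divide_strict_left_mono mult_pos_pos order.strict_trans)
qed

lemma mult_div_sqrt_le:
  fixes s :: real
  assumes "0 \<le> a" "0 \<le> w" "0 < s"
  shows "a * w^2 / sqrt (a^2 * w^2 + s) \<le> w"
proof -
  have "a * w = sqrt ((a * w)^2)"
    using assms by simp
  also have "\<dots> \<le> sqrt (a^2 * w^2 + s)"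
    using assms by (simp add: power_mult_distrib)
  finally have "a * w * w \<le> sqrt (a^2 * w^2 + s) * w"
    using assms(2) by (rule mult_right_mono)
  moreover have "0 < sqrt (a^2 * w^2 + s)"
    using assms by (simp add: add_nonneg_pos)
  ultimately show ?thesis
    by (simp add: divide_le_eq power2_eq_square mult.commute mult.left_commute)
qed

lemma div_sqrt_ge:
  fixes s :: real
  assumes "0 \<le> u" "u \<le> 1" "0 < s"
  shows "u / sqrt (a^2 + s) \<le> u / sqrt (a^2 * u + s)"
proof -
  have "sqrt (a^2 * u + s) \<le> sqrt (a^2 + s)"
    using assms by (simp add: mult_left_le)
  moreover have "0 < sqrt (a^2 * u + s)"
    using assms by (simp add: add_nonneg_pos)
  ultimately show ?thesis
    using assms by (simp add: divide_left_mono)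
qed

text \<open>The derivative \<open>u s / (a\<^sup>2 u + s)\<^sup>3\<^sup>/\<^sup>2\<close> decreases in \<open>a > 0\<close>.\<close>
lemma concave_on_mult_div_sqrt:
  fixes s :: real
  assumes "0 \<le> u" "0 < s"
  shows "concave_on {0<..} (\<lambda>a. a * u / sqrt (a^2 * u + s))"
  unfolding concave_on_def
proof (rule convex_on_realI[where f'="\<lambda>x. - (u * s / ((x^2 * u + s) * sqrt (x^2 * u + s)))"])
  fix x :: real
  have pos: "0 < x^2 * u + s"
    using assms by (simp add: add_nonneg_pos)
  have "((\<lambda>a. - (a * u / sqrt (a^2 * u + s))) has_real_derivative
      - ((u * sqrt (x^2 * u + s) - x * u * (inverse (sqrt (x^2 * u + s)) / 2 * (2 * x * u)))
         / (sqrt (x^2 * u + s))^2)) (at x)"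
    using pos by (auto intro!: derivative_eq_intros simp: power2_eq_square)
  also have "(u * sqrt (x^2 * u + s) - x * u * (inverse (sqrt (x^2 * u + s)) / 2 * (2 * x * u)))
         / (sqrt (x^2 * u + s))^2 = u * s / ((x^2 * u + s) * sqrt (x^2 * u + s))"
    using pos by (simp add: field_simps power2_eq_square)
  finally show "((\<lambda>a. - (a * u / sqrt (a^2 * u + s))) has_real_derivative
      - (u * s / ((x^2 * u + s) * sqrt (x^2 * u + s)))) (at x)" .
next
  fix x y :: real
  assume "x \<in> {0<..}" "x \<le> y"
  then have le: "x^2 * u + s \<le> y^2 * u + s"
    using assms by (simp add: power_mono mult_right_mono)
  have pos: "0 < x^2 * u + s"
    using assms by (simp add: add_nonneg_pos)
  have "(x^2 * u + s) * sqrt (x^2 * u + s) \<le> (y^2 * u + s) * sqrt (y^2 * u + s)"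
    using le pos by (simp add: mult_mono)
  moreover have "0 < (x^2 * u + s) * sqrt (x^2 * u + s)" "0 \<le> u * s"
    using pos assms by simp_all
  ultimately have "u * s / ((y^2 * u + s) * sqrt (y^2 * u + s)) \<le> u * s / ((x^2 * u + s) * sqrt (x^2 * u + s))"
    by (simp add: divide_left_mono)
  then show "- (u * s / ((x^2 * u + s) * sqrt (x^2 * u + s)))
      \<le> - (u * s / ((y^2 * u + s) * sqrt (y^2 * u + s)))"
    by simp
qed simp

definition psi1_ratio :: "real \<Rightarrow> real \<Rightarrow> real" where
  "psi1_ratio a s = integral {0..pi/2} (\<lambda>\<theta>. (sin \<theta>)^2 / sqrt (a^2 * (sin \<theta>)^2 + s))"

lemma psi1_eq_mult_ratio: "psi1 a s = a * psi1_ratio a s"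
  unfolding psi1_def psi1_ratio_def by (simp flip: integral_mult_right)

lemma psi1_zero [simp]: "psi1 0 s = 0"
  by (simp add: psi1_def)

lemma psi1_denominator_pos: "0 < s \<Longrightarrow> 0 < a^2 * (sin \<theta>)^2 + (s::real)"
  by (simp add: add_nonneg_pos)

lemma psi1_integrand_continuous:
  "0 < s \<Longrightarrow> continuous_on {0..pi/2} (\<lambda>\<theta>. a * (sin \<theta>)^2 / sqrt (a^2 * (sin \<theta>)^2 + s))"
  by (intro continuous_intros) (simp add: psi1_denominator_pos less_imp_neq[symmetric])

lemma psi1_ratio_integrand_continuous:
  "0 < s \<Longrightarrow> continuous_on {0..pi/2} (\<lambda>\<theta>. (sin \<theta>)^2 / sqrt (a^2 * (sin \<theta>)^2 + s))"
  by (intro continuous_intros) (simp add: psi1_denominator_pos less_imp_neq[symmetric])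

lemma sin_squared_pos: "\<theta> \<in> {0<..<pi/2} \<Longrightarrow> 0 < (sin \<theta>)^2"
  using sin_gt_zero[of \<theta>] by auto

lemma psi1_strict_mono:
  assumes "0 < s" "0 \<le> a" "a < b"
  shows "psi1 a s < psi1 b s"
  unfolding psi1_def
proof (rule integral_less_real)
  show "{0<..<pi/2} \<noteq> {}"
    by (simp add: not_le)
qed (use assms psi1_integrand_continuous mult_div_sqrt_strict_mono sin_squared_pos in auto)

lemma psi1_ratio_strict_antimono:
  assumes "0 < s" "0 \<le> a" "a < b"
  shows "psi1_ratio b s < psi1_ratio a s"
  unfolding psi1_ratio_def
proof (rule integral_less_real)
  show "{0<..<pi/2} \<noteq> {}"
    by (simp add: not_le)
qed (use assms psi1_ratio_integrand_continuous div_sqrt_strict_antimono sin_squared_pos in auto)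

lemma psi1_le_one:
  assumes "0 < s" "0 \<le> a"
  shows "psi1 a s \<le> 1"
proof -
  have "psi1 a s \<le> integral {0..pi/2} sin"
    unfolding psi1_def using assms
    by (intro integral_le integrable_continuous_interval psi1_integrand_continuous
        mult_div_sqrt_le continuous_intros) (auto simp: sin_ge_zero)
  then show ?thesis
    by (simp add: integral_sin_0_pi_half)
qed

lemma psi1_ratio_zero: "psi1_ratio 0 s = pi / (4 * sqrt s)"
  by (simp add: psi1_ratio_def integral_sin_squared_0_pi_half)

lemma psi1_ratio_ge:
  assumes "0 < s"
  shows "pi / (4 * sqrt (a^2 + s)) \<le> psi1_ratio a s"
proof -
  have "integral {0..pi/2} (\<lambda>\<theta>. (sin \<theta>)^2 / sqrt (a^2 + s)) \<le> psi1_ratio a s"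
    unfolding psi1_ratio_def using assms
    by (intro integral_le integrable_continuous_interval psi1_ratio_integrand_continuous
        div_sqrt_ge continuous_intros) (auto simp: abs_square_le_1 add_nonneg_pos less_imp_neq[symmetric])
  then show ?thesis
    by (simp add: integral_sin_squared_0_pi_half)
qed

lemma psi1_concave:
  assumes "0 < s"
  shows "concave_on {0<..} (\<lambda>a. psi1 a s)"
  unfolding psi1_def using assms
  by (intro concave_on_integral concave_on_mult_div_sqrt integrable_continuous_interval
      psi1_integrand_continuous) auto

lemma psi1_continuous:
  assumes "0 < s"
  shows "continuous_on {0<..} (\<lambda>a. psi1 a s)"
proof -
  have "continuous_on {0<..} (\<lambda>a. - psi1 a s)"
    using psi1_concave[OF assms] by (intro convex_on_continuous) (auto simp: concave_on_def)
  then show ?thesis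
    using continuous_on_minus by fastforce
qed

lemma psi1_ratio_eq_one_exists:
  assumes "0 < s" "s < pi^2/16"
  obtains F where "0 < F" "psi1_ratio F s = 1"
proof -
  define a0 where "a0 = sqrt ((pi^2/16 - s) / 2)"
  have a0_pos: "0 < a0" and a0_sq: "a0^2 = (pi^2/16 - s) / 2"
    using assms by (simp_all add: a0_def)
  have "sqrt (a0^2 + s) < sqrt ((pi/4)^2)"
    using a0_sq assms by (intro real_sqrt_less_mono) (simp add: power_divide)
  moreover have "0 < sqrt (a0^2 + s)"
    using assms by (simp add: add_nonneg_pos)
  ultimately have "1 < pi / (4 * sqrt (a0^2 + s))"
    by (simp add: less_divide_eq)
  then have below: "a0 - psi1 a0 s \<le> 0"
    using psi1_ratio_ge[OF \<open>0 < s\<close>, of a0] a0_pos by (simp add: psi1_eq_mult_ratio)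
  have above: "0 \<le> 2 - psi1 2 s"
    using psi1_le_one[OF \<open>0 < s\<close>, of 2] by simp
  have "pi^2 < 4^2"
    using pi_gt_zero pi_less_4 by (intro power_strict_mono) auto
  then have "a0^2 < 2^2"
    using a0_sq assms by simp
  then have "a0 \<le> 2"
    using power2_less_imp_less by fastforce
  moreover have "continuous_on {a0..2} (\<lambda>a. a - psi1 a s)"
    using a0_pos by (intro continuous_intros continuous_on_subset[OF psi1_continuous[OF \<open>0 < s\<close>]]) auto
  ultimately obtain F where F: "a0 \<le> F" "F - psi1 F s = 0"
    using IVT'[of "\<lambda>a. a - psi1 a s" a0 0 2] below above by auto
  then have "0 < F"
    using a0_pos by simp
  moreover have "psi1_ratio F s = 1"
    using F \<open>0 < F\<close> by (simp add: psi1_eq_mult_ratio)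
  ultimately show thesis
    by (rule that)
qed

lemma psi1_fixed_points_below_threshold:
  assumes "0 < s" "s < pi^2/16"
  shows "\<exists>F>0. {a. a \<ge> 0 \<and> a = psi1 a s} = {0, F}
           \<and> (\<forall>a. 0 < a \<and> a < F \<longrightarrow> a < psi1 a s \<and> psi1 a s < F)
           \<and> (\<forall>a. a > F \<longrightarrow> F < psi1 a s \<and> psi1 a s < a)"
proof -
  obtain F where "0 < F" and ratio_F: "psi1_ratio F s = 1"
    using psi1_ratio_eq_one_exists assms by blast
  have fixed: "psi1 F s = F"
    using ratio_F by (simp add: psi1_eq_mult_ratio)
  have below: "a < psi1 a s" if "0 < a" "a < F" for a
    using psi1_ratio_strict_antimono[OF \<open>0 < s\<close> _ \<open>a < F\<close>] that ratio_F
    by (simp add: psi1_eq_mult_ratio)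
  have above: "psi1 a s < a" if "F < a" for a
    using psi1_ratio_strict_antimono[OF \<open>0 < s\<close> _ that] that \<open>0 < F\<close> ratio_F
    by (simp add: psi1_eq_mult_ratio)
  have "a = 0 \<or> a = F" if "0 \<le> a" "a = psi1 a s" for a
  proof (rule ccontr)
    assume "\<not> (a = 0 \<or> a = F)"
    then have "0 < a \<and> a < F \<or> F < a"
      using \<open>0 \<le> a\<close> by auto
    then show False
      using below[of a] above[of a] \<open>a = psi1 a s\<close> by (metis less_irrefl)
  qed
  then have "{a. a \<ge> 0 \<and> a = psi1 a s} = {0, F}"
    using fixed \<open>0 < F\<close> by auto
  moreover have "a < psi1 a s \<and> psi1 a s < F" if "0 < a" "a < F" for a
    using below psi1_strict_mono[OF \<open>0 < s\<close> _ \<open>a < F\<close>] fixed that by simp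
  moreover have "F < psi1 a s \<and> psi1 a s < a" if "F < a" for a
    using above psi1_strict_mono[OF \<open>0 < s\<close> _ that] fixed that \<open>0 < F\<close> by simp
  ultimately show ?thesis
    using \<open>0 < F\<close> by blast
qed

lemma psi1_fixed_points_above_threshold:
  assumes "pi^2/16 \<le> s"
  shows "{a. a \<ge> 0 \<and> a = psi1 a s} = {0} \<and> (\<forall>a. a > 0 \<longrightarrow> 0 < psi1 a s \<and> psi1 a s < a)"
proof -
  have "0 < pi^2/16"
    by simp
  with assms have "0 < s"
    by linarith
  have "sqrt ((pi/4)^2) \<le> sqrt s"
    using assms by (intro real_sqrt_le_mono) (simp add: power_divide)
  then have "psi1_ratio 0 s \<le> 1"
    using \<open>0 < s\<close> by (simp add: psi1_ratio_zero divide_le_eq)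
  then have below_diagonal: "0 < psi1 a s \<and> psi1 a s < a" if "0 < a" for a
    using psi1_ratio_strict_antimono[OF \<open>0 < s\<close> order_refl that] psi1_strict_mono[OF \<open>0 < s\<close> order_refl that] that
    by (simp add: psi1_eq_mult_ratio)
  then have "0 \<le> a \<and> a = psi1 a s \<longleftrightarrow> a = 0" for a
    by (metis less_irrefl order_le_less psi1_zero)
  then have "{a. a \<ge> 0 \<and> a = psi1 a s} = {0}"
    by (simp only: set_eq_iff mem_Collect_eq singleton_iff simp_thms)
  with below_diagonal show ?thesis
    by blast
qed

theorem mainTheorem9:
  shows "(\<forall>s::real. s > 0 \<longrightarrow>
            concave_on {0<..} (\<lambda>a. psi1 a s) \<and> strict_mono_on {0<..} (\<lambda>a. psi1 a s))
       \<and> (\<forall>a s::real. a > 0 \<and> s > 0 \<longrightarrow> 0 < psi1 a s \<and> psi1 a s \<le> 1)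
       \<and> (\<forall>s::real. 0 < s \<and> s < pi^2/16 \<longrightarrow>
            (\<exists>F>0. {a. a \<ge> 0 \<and> a = psi1 a s} = {0, F}
               \<and> (\<forall>a. 0 < a \<and> a < F \<longrightarrow> a < psi1 a s \<and> psi1 a s < F)
               \<and> (\<forall>a. a > F \<longrightarrow> F < psi1 a s \<and> psi1 a s < a)))
       \<and> (\<forall>s::real. s \<ge> pi^2/16 \<longrightarrow>
            {a. a \<ge> 0 \<and> a = psi1 a s} = {0}
            \<and> (\<forall>a. a > 0 \<longrightarrow> 0 < psi1 a s \<and> psi1 a s < a))"
proof -
  have "concave_on {0<..} (\<lambda>a. psi1 a s) \<and> strict_mono_on {0<..} (\<lambda>a. psi1 a s)" if "0 < s" for s
    using psi1_concave[OF that] psi1_strict_mono[OF that] by (auto intro: strict_mono_onI)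
  moreover have "0 < psi1 a s \<and> psi1 a s \<le> 1" if "0 < a" "0 < s" for a s
    using psi1_strict_mono[of s 0 a] psi1_le_one[of s a] that by simp
  moreover note psi1_fixed_points_below_threshold psi1_fixed_points_above_threshold
  ultimately show ?thesis
    by blast
qed

end
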